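(* Let $V$ be a finite vertex set with $|V|=n$ and $\{k_u\}_{u\in V}$ a degree sequence with $k_u\ge 1$ for all $u$, such that some vertex has odd degree and some vertex $v$ has $k_v-(n-1)$ negative or odd. Then every multiloop-graph $G$ on $V$ with degree sequence $\{k_u\}$ can be transformed, by a finite sequence of double edge swaps all of whose intermediate graphs are multiloop-graphs with degree sequence $\{k_u\}$, into a multiloop-graph having exactly $\lfloor k_u/2\rfloor$ self-loops at every vertex $u$ (so that its non-loop edges form a simple graph with degree sequence $\{k_u \bmod 2\}$, i.e. a perfect matching on the odd-degree vertices).
   Context: All graphs are on a fixed labeled vertex set $V$; a graph is a multiset $E$ of unordered pairs $(u,v)$ with $u,v\in V$, where a pair $(u,u)$ is a self-loop. The degree $k_u$ of $u$ is the number of edge-endpoints at $u$, so each self-loop at $u$ contributes $2$ to $k_u$. A multiloop-graph is such a graph in which self-loops may occur with any multiplicity but every non-loop edge $(u,v)$, $u\ne v$, occurs at most once. A double edge swap $(u,v),(x,y)\leadsto(u,x),(v,y)$ removes one copy of each of two edge occurrences $(u,v)$ and $(x,y)$ (loops allowed) and adds the edges $(u,x)$ and $(v,y)$; either pairing of endpoints may be used. It preserves the degree sequence. *)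

theory Defs
  imports Main "HOL-Library.Multiset" "HOL-Library.Uprod"
begin

definition graph_on :: "'a set \<Rightarrow> 'a uprod multiset \<Rightarrow> bool" where
  "graph_on V E \<longleftrightarrow> (\<forall>e\<in>#E. set_uprod e \<subseteq> V)"

definition deg :: "'a uprod multiset \<Rightarrow> 'a \<Rightarrow> nat" where
  "deg E u = sum_mset (image_mset
      (\<lambda>e. if e = Upair u u then 2 else if u \<in> set_uprod e then 1 else 0) E)"

definition multiloop_graph :: "'a set \<Rightarrow> 'a uprod multiset \<Rightarrow> bool" where
  "multiloop_graph V E \<longleftrightarrow> graph_on V E \<and>
     (\<forall>u v. u \<noteq> v \<longrightarrow> count E (Upair u v) \<le> 1)"

text \<open>Double edge swap (u,v),(x,y) ~> (u,x),(v,y); the other pairing is obtained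
  by renaming x,y since Upair x y = Upair y x.\<close>
definition double_edge_swap :: "'a uprod multiset \<Rightarrow> 'a uprod multiset \<Rightarrow> bool" where
  "double_edge_swap E E' \<longleftrightarrow> (\<exists>u v x y.
      Upair u v \<in># E \<and> Upair x y \<in># E - {#Upair u v#} \<and>
      E' = E - {#Upair u v, Upair x y#} + {#Upair u x, Upair v y#})"

definition swap_step :: "'a set \<Rightarrow> ('a \<Rightarrow> nat) \<Rightarrow> 'a uprod multiset \<Rightarrow> 'a uprod multiset \<Rightarrow> bool" where
  "swap_step V k E E' \<longleftrightarrow> double_edge_swap E E' \<and> multiloop_graph V E' \<and>
     (\<forall>u\<in>V. deg E' u = k u)"

end

theory Submission
  imports Defs
begin

text \<open>
  Induct on the number of proper (non-loop) edges. A vertex u with fewer than k u div 2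
  loops has two neighbours v, w. If the proper edges do not form a cluster graph, an
  induced path b-a-c is swapped into a loop at a and the edge bc. Otherwise, either an edge
  outside the cluster of u exists, and two swaps turn it together with uv, uw into a loop
  at u; or all proper edges lie in the cluster K of u. Then K = V is excluded by the
  hypothesis on k v - (n - 1), and a triangle K is excluded because all degrees would be
  even; so K has at least four vertices and some vertex x outside K carries a loop (as
  k x \<ge> 1), which three swaps trade for loops at two vertices of K.
\<close>

definition adjacent :: "'a uprod multiset \<Rightarrow> 'a \<Rightarrow> 'a \<Rightarrow> bool" where
  "adjacent E a b \<longleftrightarrow> a \<noteq> b \<and> Upair a b \<in># E"

definition neighbours :: "'a uprod multiset \<Rightarrow> 'a \<Rightarrow> 'a set" where
  "neighbours E a = {b. adjacent E a b}"

definition proper_edges :: "'a uprod multiset \<Rightarrow> nat" where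
  "proper_edges E = size (filter_mset proper_uprod E)"

definition cluster_graph :: "'a uprod multiset \<Rightarrow> bool" where
  "cluster_graph E \<longleftrightarrow> (\<forall>a b c. adjacent E a b \<longrightarrow> adjacent E a c \<longrightarrow> b \<noteq> c \<longrightarrow> adjacent E b c)"

definition swap :: "'a uprod multiset \<Rightarrow> 'a \<Rightarrow> 'a \<Rightarrow> 'a \<Rightarrow> 'a \<Rightarrow> 'a uprod multiset" where
  "swap E a b c d = E - {#Upair a b, Upair c d#} + {#Upair a c, Upair b d#}"

lemma Upair_commute: "Upair a b = Upair b a"
  by simp

lemma adjacent_sym: "adjacent E a b \<longleftrightarrow> adjacent E b a"
  unfolding adjacent_def by (metis Upair_inject)

lemma cluster_graph_trans:
  "cluster_graph E \<Longrightarrow> adjacent E a b \<Longrightarrow> adjacent E b c \<Longrightarrow> a \<noteq> c \<Longrightarrow> adjacent E a c"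
  unfolding cluster_graph_def by (meson adjacent_sym)

lemma finite_neighbours: "finite (neighbours E a)"
proof (rule finite_subset)
  show "neighbours E a \<subseteq> \<Union> (set_uprod ` set_mset E)"
    by (force simp: neighbours_def adjacent_def)
qed auto

lemma deg_add_mset [simp]:
  "deg (add_mset (Upair p q) E) u = of_bool (p = u) + of_bool (q = u) + deg E u"
  by (auto simp: deg_def)

lemma deg_eq_loops_plus_proper:
  "deg E u = 2 * count E (Upair u u) + size (filter_mset (\<lambda>e. proper_uprod e \<and> u \<in> set_uprod e) E)"
proof (induction E)
  case (add e E)
  then show ?case by (cases e) auto
qed (simp add: deg_def)

lemma deg_eq_loops_plus_neighbours:
  assumes simple: "\<forall>a b. a \<noteq> b \<longrightarrow> count E (Upair a b) \<le> 1"
  shows "deg E u = 2 * count E (Upair u u) + card (neighbours E u)"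
proof -
  have "filter_mset (\<lambda>e. proper_uprod e \<and> u \<in> set_uprod e) E = mset_set (Upair u ` neighbours E u)"
  proof (rule multiset_eqI)
    fix e :: "'a uprod"
    show "count (filter_mset (\<lambda>e. proper_uprod e \<and> u \<in> set_uprod e) E) e
        = count (mset_set (Upair u ` neighbours E u)) e"
    proof (cases "proper_uprod e \<and> u \<in> set_uprod e")
      case True
      then obtain v where e: "e = Upair u v" "u \<noteq> v"
        by (cases e) auto
      then have "count E e \<le> 1"
        using simple by blast
      then have "count E e = of_bool (e \<in># E)"
        by (cases "e \<in># E") (auto simp: not_in_iff dest: count_inI[rotated] intro: le_antisym)
      then show ?thesis
        using True e finite_neighbours[of E u]
        by (auto simp: neighbours_def adjacent_def count_mset_set')
    next
      case False
      then show ?thesis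
        using finite_neighbours[of E u]
        by (auto simp: neighbours_def adjacent_def count_mset_set')
    qed
  qed
  moreover have "card (Upair u ` neighbours E u) = card (neighbours E u)"
    by (rule card_image) (auto simp: inj_on_def)
  ultimately show ?thesis
    by (simp add: deg_eq_loops_plus_proper finite_neighbours)
qed

lemma swap_add_mset:
  "swap (add_mset (Upair a b) (add_mset (Upair c d) R)) a b c d = add_mset (Upair a c) (add_mset (Upair b d) R)"
  by (simp add: swap_def)

lemma two_edgesE:
  assumes "Upair a b \<in># E" and "Upair c d \<in># E - {#Upair a b#}"
  obtains R where "E = add_mset (Upair a b) (add_mset (Upair c d) R)"
  using assms by (metis insert_DiffM)

lemma in_swap_iff:
  "e \<in># swap E a b c d \<longleftrightarrow> e = Upair a c \<or> e = Upair b d \<or> count {#Upair a b, Upair c d#} e < count E e"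
  by (auto simp: swap_def in_diff_count)

lemma proper_edges_swap:
  assumes "Upair a b \<in># E" and "Upair c d \<in># E - {#Upair a b#}"
  shows "proper_edges (swap E a b c d) + of_bool (a \<noteq> b) + of_bool (c \<noteq> d)
       = proper_edges E + of_bool (a \<noteq> c) + of_bool (b \<noteq> d)"
proof -
  obtain R where "E = add_mset (Upair a b) (add_mset (Upair c d) R)"
    using assms by (rule two_edgesE)
  then show ?thesis
    by (simp add: swap_add_mset proper_edges_def)
qed

lemma swap_step_swap:
  assumes G: "multiloop_graph V E" "\<forall>u\<in>V. deg E u = k u"
    and "Upair a b \<in># E" and "Upair c d \<in># E - {#Upair a b#}"
    and new_ac: "a = c \<or> Upair a c \<notin># E" and new_bd: "b = d \<or> Upair b d \<notin># E"
    and distinct: "a = c \<or> b = d \<or> Upair a c \<noteq> Upair b d"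
  shows "swap_step V k E (swap E a b c d)"
proof -
  obtain R where E: "E = add_mset (Upair a b) (add_mset (Upair c d) R)"
    using assms(3,4) by (rule two_edgesE)
  let ?E' = "add_mset (Upair a c) (add_mset (Upair b d) R)"
  have "double_edge_swap E ?E'"
    unfolding double_edge_swap_def E by (intro exI[of _ a] exI[of _ b] exI[of _ c] exI[of _ d]) simp
  moreover have "graph_on V ?E'"
    using G(1) by (auto simp: E multiloop_graph_def graph_on_def)
  moreover have "count ?E' (Upair u v) \<le> 1" if "u \<noteq> v" for u v
  proof (cases "Upair u v = Upair a c \<or> Upair u v = Upair b d")
    case True
    have "a = c \<or> Upair a c \<notin># R" "b = d \<or> Upair b d \<notin># R"
      using new_ac new_bd by (auto simp: E)
    with True that distinct show ?thesis
      by (elim disjE; simp only:; auto simp: not_in_iff)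
  next
    case False
    then have "count ?E' (Upair u v) = count R (Upair u v)"
      by auto
    also have "\<dots> \<le> count E (Upair u v)"
      by (simp add: E)
    finally show ?thesis
      using G(1) that by (fastforce simp: multiloop_graph_def)
  qed
  moreover have "deg ?E' u = deg E u" for u
    by (simp add: E)
  moreover have "swap E a b c d = ?E'"
    by (simp add: E swap_add_mset)
  ultimately show ?thesis
    using G(2) by (simp add: swap_step_def multiloop_graph_def)
qed

lemma not_in_swap: "e \<notin># E \<Longrightarrow> e \<noteq> Upair a c \<Longrightarrow> e \<noteq> Upair b d \<Longrightarrow> e \<notin># swap E a b c d"
  by (auto simp: in_swap_iff not_in_iff)

lemma swap_stepD:
  assumes "swap_step V k E E'"
  shows "multiloop_graph V E'" and "\<forall>u\<in>V. deg E' u = k u"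
  using assms by (simp_all add: swap_step_def)

lemma reduce_induced_path:
  assumes G: "multiloop_graph V E" "\<forall>u\<in>V. deg E u = k u"
    and ab: "adjacent E a b" and ac: "adjacent E a c" and "b \<noteq> c" and "\<not> adjacent E b c"
  shows "\<exists>E'. (swap_step V k)\<^sup>+\<^sup>+ E E' \<and> proper_edges E' < proper_edges E"
proof -
  have edges: "Upair a b \<in># E" "Upair a c \<in># E - {#Upair a b#}"
    using ab ac \<open>b \<noteq> c\<close> by (auto simp: adjacent_def in_diff_count)
  have "Upair b c \<notin># E"
    using assms(5,6) by (simp add: adjacent_def)
  then have "swap_step V k E (swap E a b a c)"
    using swap_step_swap[OF G edges] by simp
  moreover have "proper_edges (swap E a b a c) < proper_edges E"
    using proper_edges_swap[OF edges] ab ac assms(5) by (simp add: adjacent_def)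
  ultimately show ?thesis
    by blast
qed

lemma reduce_with_distant_edge:
  assumes G: "multiloop_graph V E" "\<forall>u\<in>V. deg E u = k u"
    and cluster: "cluster_graph E"
    and uv: "adjacent E u v" and uw: "adjacent E u w" and "v \<noteq> w"
    and xy: "adjacent E x y" and "x \<noteq> u" and "\<not> adjacent E u x"
  shows "\<exists>E'. (swap_step V k)\<^sup>+\<^sup>+ E E' \<and> proper_edges E' < proper_edges E"
proof -
  have "\<not> adjacent E u y"
    using cluster_graph_trans[OF cluster, of u y x] xy \<open>x \<noteq> u\<close> \<open>\<not> adjacent E u x\<close>
    by (auto simp: adjacent_sym[of E y x])
  moreover have "y \<noteq> u"
    using xy \<open>\<not> adjacent E u x\<close> by (auto simp: adjacent_sym[of E x y])
  moreover have "\<not> adjacent E v y"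
    using cluster_graph_trans[OF cluster uv, of y] \<open>\<not> adjacent E u y\<close> \<open>y \<noteq> u\<close> by auto
  moreover have "\<not> adjacent E w x"
    using cluster_graph_trans[OF cluster uw, of x] \<open>x \<noteq> u\<close> \<open>\<not> adjacent E u x\<close> by auto
  ultimately have dist: "u \<noteq> v" "u \<noteq> w" "x \<noteq> u" "x \<noteq> y" "x \<noteq> v" "x \<noteq> w" "y \<noteq> u" "y \<noteq> v" "y \<noteq> w"
    and new: "Upair u x \<notin># E" "Upair v y \<notin># E" "Upair w x \<notin># E"
    using assms by (auto simp: adjacent_def)
  \<comment> \<open>Rewire uv, xy into ux, vy (no net change), then close w-u-x into a loop at u.\<close>
  define E1 where "E1 = swap E u v x y"
  have edges1: "Upair u v \<in># E" "Upair x y \<in># E - {#Upair u v#}"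
    using uv xy dist by (auto simp: adjacent_def in_diff_count)
  have step1: "swap_step V k E E1"
    unfolding E1_def using swap_step_swap[OF G edges1] new dist by simp
  have pe1: "proper_edges E1 = proper_edges E"
    unfolding E1_def using proper_edges_swap[OF edges1] dist by simp
  have edges2: "Upair u w \<in># E1" "Upair u x \<in># E1 - {#Upair u w#}"
    using uw dist \<open>v \<noteq> w\<close> by (auto simp: E1_def in_swap_iff adjacent_def in_diff_count)
  have "Upair w x \<notin># E1"
    unfolding E1_def using new(3) by (intro not_in_swap) (use dist in auto)
  then have step2: "swap_step V k E1 (swap E1 u w u x)"
    using swap_step_swap[OF swap_stepD[OF step1] edges2] by simp
  have "proper_edges (swap E1 u w u x) < proper_edges E1"
    using proper_edges_swap[OF edges2] dist by simp
  with step1 step2 pe1 show ?thesis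
    by (metis tranclp.r_into_trancl tranclp.trancl_into_trancl)
qed

lemma reduce_with_isolated_loop:
  assumes G: "multiloop_graph V E" "\<forall>u\<in>V. deg E u = k u"
    and cluster: "cluster_graph E"
    and uv: "adjacent E u v" and uw: "adjacent E u w" and uz: "adjacent E u z"
    and "v \<noteq> w" "v \<noteq> z" "w \<noteq> z"
    and loop: "Upair x x \<in># E" and isolated: "\<forall>t. \<not> adjacent E x t"
  shows "\<exists>E'. (swap_step V k)\<^sup>+\<^sup>+ E E' \<and> proper_edges E' < proper_edges E"
proof -
  have vz: "Upair v z \<in># E"
    using cluster_graph_trans[OF cluster _ uz, of v] uv \<open>v \<noteq> z\<close> by (simp add: adjacent_sym adjacent_def)
  have dist: "u \<noteq> v" "u \<noteq> w" "u \<noteq> z" "x \<noteq> u" "x \<noteq> v" "x \<noteq> w" "x \<noteq> z"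
      "v \<noteq> w" "v \<noteq> z" "w \<noteq> z"
    using uv uw uz isolated adjacent_sym[of E u] assms(7-9) by (auto simp: adjacent_def)
  have new: "Upair u x \<notin># E" "Upair v x \<notin># E" "Upair w x \<notin># E" "Upair x z \<notin># E"
    using isolated dist by (auto simp: adjacent_def Upair_commute[of _ x])
  \<comment> \<open>Open the loop at x into the path v-x-u, then close x-u-w into a loop at u and
    v-x with v-z into a loop at v; the first swap adds a proper edge, the other two remove one each.\<close>
  define E1 where "E1 = swap E u v x x"
  have edges1: "Upair u v \<in># E" "Upair x x \<in># E - {#Upair u v#}"
    using uv loop dist by (auto simp: adjacent_def in_diff_count)
  have step1: "swap_step V k E E1"
    unfolding E1_def using swap_step_swap[OF G edges1] new dist by simp
  have pe1: "proper_edges E1 = Suc (proper_edges E)"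
    unfolding E1_def using proper_edges_swap[OF edges1] dist by simp
  note G1 = swap_stepD[OF step1]
  define E2 where "E2 = swap E1 u w u x"
  have edges2: "Upair u w \<in># E1" "Upair u x \<in># E1 - {#Upair u w#}"
    using uw dist by (auto simp: E1_def in_swap_iff adjacent_def in_diff_count)
  have "Upair w x \<notin># E1"
    unfolding E1_def using new(3) by (intro not_in_swap) (use dist in auto)
  then have step2: "swap_step V k E1 E2"
    unfolding E2_def using swap_step_swap[OF G1 edges2] by simp
  have pe2: "proper_edges E2 = proper_edges E"
    unfolding E2_def using proper_edges_swap[OF edges2] dist pe1 by simp
  note G2 = swap_stepD[OF step2]
  have edges3: "Upair v x \<in># E2" "Upair v z \<in># E2 - {#Upair v x#}"
    using vz dist by (auto simp: E2_def E1_def in_swap_iff in_diff_count)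
  have "Upair x z \<notin># E2"
    unfolding E2_def E1_def using new(4) by (intro not_in_swap) (use dist in auto)
  then have step3: "swap_step V k E2 (swap E2 v x v z)"
    using swap_step_swap[OF G2 edges3] by simp
  have "proper_edges (swap E2 v x v z) < proper_edges E2"
    using proper_edges_swap[OF edges3] dist by simp
  with step1 step2 step3 pe2 show ?thesis
    by (metis tranclp.r_into_trancl tranclp.trancl_into_trancl)
qed

lemma cluster_graph_neighbours:
  assumes cluster: "cluster_graph E" and y: "y \<in> insert u (neighbours E u)"
  shows "neighbours E y = insert u (neighbours E u) - {y}"
proof (cases "y = u")
  case True
  then show ?thesis
    by (auto simp: neighbours_def adjacent_def)
next
  case False
  then have uy: "adjacent E u y"
    using y by (simp add: neighbours_def)
  show ?thesis
  proof (intro equalityI subsetI)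
    fix t assume "t \<in> neighbours E y"
    then show "t \<in> insert u (neighbours E u) - {y}"
      using cluster_graph_trans[OF cluster uy, of t] by (auto simp: neighbours_def adjacent_def)
  next
    fix t assume t: "t \<in> insert u (neighbours E u) - {y}"
    have "adjacent E y u"
      using uy adjacent_sym by metis
    then show "t \<in> neighbours E y"
      using t cluster_graph_trans[OF cluster \<open>adjacent E y u\<close>, of t] by (auto simp: neighbours_def)
  qed
qed

lemma reduce_single_cluster:
  assumes "finite V" and "card V = n" and pos: "\<forall>u\<in>V. k u \<ge> 1"
    and odd: "\<exists>u\<in>V. odd (k u)"
    and not_complete: "\<exists>v\<in>V. int (k v) - (int n - 1) < 0 \<or> odd (int (k v) - (int n - 1))"
    and G: "multiloop_graph V E" "\<forall>u\<in>V. deg E u = k u"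
    and cluster: "cluster_graph E"
    and uv: "adjacent E u v" and uw: "adjacent E u w" and "v \<noteq> w"
    and local: "\<forall>x y. adjacent E x y \<longrightarrow> x = u \<or> adjacent E u x"
  shows "\<exists>E'. (swap_step V k)\<^sup>+\<^sup>+ E E' \<and> proper_edges E' < proper_edges E"
proof -
  define C where "C = insert u (neighbours E u)"
  have deg: "k y = 2 * count E (Upair y y) + card (neighbours E y)" if "y \<in> V" for y
    using G deg_eq_loops_plus_neighbours[of E y] that by (simp add: multiloop_graph_def)
  have "u \<notin> neighbours E u"
    by (simp add: neighbours_def adjacent_def)
  then have card_C: "card C = Suc (card (neighbours E u))"
    by (simp add: C_def finite_neighbours)
  have card_inside: "card (neighbours E y) = card (neighbours E u)" if "y \<in> C" for y
    using cluster_graph_neighbours[OF cluster that[unfolded C_def]] that card_C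
    by (simp add: C_def finite_neighbours)
  have outside: "neighbours E y = {}" if "y \<notin> C" for y
    using that local by (auto simp: C_def neighbours_def)
  have "C \<subseteq> V"
    using G uv by (force simp: C_def neighbours_def adjacent_def multiloop_graph_def graph_on_def)
  show ?thesis
  proof (cases "V \<subseteq> C")
    case True
    with \<open>C \<subseteq> V\<close> have "card (neighbours E y) = n - 1" if "y \<in> C" for y
      using card_inside[OF that] card_C \<open>card V = n\<close> by simp
    moreover have "n \<ge> 1"
      using \<open>finite V\<close> \<open>card V = n\<close> \<open>C \<subseteq> V\<close> True by (auto simp: C_def card_gt_0_iff Suc_le_eq)
    ultimately have "int (k y) - (int n - 1) = 2 * int (count E (Upair y y))" if "y \<in> V" for y
      using deg[OF that] True that by auto
    with not_complete show ?thesis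
      by auto
  next
    case False
    then obtain x where "x \<in> V" "x \<notin> C"
      by blast
    then have isolated: "\<forall>t. \<not> adjacent E x t" and "k x = 2 * count E (Upair x x)"
      using outside[of x] deg[of x] by (auto simp: neighbours_def)
    then have loop: "Upair x x \<in># E"
      using pos \<open>x \<in> V\<close> not_in_iff by fastforce
    show ?thesis
    proof (cases "card (neighbours E u) \<ge> 3")
      case True
      have "\<not> neighbours E u \<subseteq> {v, w}"
        using card_mono[of "{v, w}" "neighbours E u"] True \<open>v \<noteq> w\<close> by auto
      then obtain z where "z \<in> neighbours E u" "z \<noteq> v" "z \<noteq> w"
        by blast
      then show ?thesis
        using reduce_with_isolated_loop[OF G cluster uv uw _ \<open>v \<noteq> w\<close> _ _ loop isolated]
        by (auto simp: neighbours_def)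
    next
      case False
      moreover have "card (neighbours E u) \<ge> 2"
        using uv uw \<open>v \<noteq> w\<close> card_mono[OF finite_neighbours, of "{v, w}" E u]
        by (simp add: neighbours_def)
      ultimately have "card (neighbours E u) = 2"
        by linarith
      then have "even (card (neighbours E y))" for y
        using card_inside[of y] outside[of y] by (cases "y \<in> C") auto
      then show ?thesis
        using odd deg by auto
    qed
  qed
qed

lemma reduce_proper_edges:
  assumes "finite V" and "card V = n" and "\<forall>u\<in>V. k u \<ge> 1"
    and "\<exists>u\<in>V. odd (k u)"
    and "\<exists>v\<in>V. int (k v) - (int n - 1) < 0 \<or> odd (int (k v) - (int n - 1))"
    and G: "multiloop_graph V E" "\<forall>u\<in>V. deg E u = k u"
    and "u \<in> V" and "count E (Upair u u) \<noteq> k u div 2"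
  shows "\<exists>E'. (swap_step V k)\<^sup>+\<^sup>+ E E' \<and> proper_edges E' < proper_edges E"
proof -
  have "k u = 2 * count E (Upair u u) + card (neighbours E u)"
    using G deg_eq_loops_plus_neighbours[of E u] \<open>u \<in> V\<close> by (simp add: multiloop_graph_def)
  with \<open>count E (Upair u u) \<noteq> k u div 2\<close> have "card (neighbours E u) \<ge> 2"
    by presburger
  then obtain v w where "v \<in> neighbours E u" "w \<in> neighbours E u" "v \<noteq> w"
    using card_le_Suc_iff[of 1 "neighbours E u"] by (auto simp: numeral_2_eq_2 Suc_le_eq card_gt_0_iff)
  then have uv: "adjacent E u v" and uw: "adjacent E u w" and "v \<noteq> w"
    by (auto simp: neighbours_def)
  consider (path) a b c where "adjacent E a b" "adjacent E a c" "b \<noteq> c" "\<not> adjacent E b c"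
    | (distant) x y where "cluster_graph E" "adjacent E x y" "x \<noteq> u" "\<not> adjacent E u x"
    | (single) "cluster_graph E" "\<forall>x y. adjacent E x y \<longrightarrow> x = u \<or> adjacent E u x"
    unfolding cluster_graph_def by blast
  then show ?thesis
  proof cases
    case path
    then show ?thesis using reduce_induced_path[OF G] by blast
  next
    case distant
    then show ?thesis using reduce_with_distant_edge[OF G _ uv uw \<open>v \<noteq> w\<close>] by blast
  next
    case single
    then show ?thesis using reduce_single_cluster[OF assms(1-5) G _ uv uw \<open>v \<noteq> w\<close>] by blast
  qed
qed

lemma reach_by_decreasing_measure:
  fixes f :: "'a \<Rightarrow> nat"
  assumes invariant: "\<And>x y. P x \<Longrightarrow> R x y \<Longrightarrow> P y"
    and decrease: "\<And>x. P x \<Longrightarrow> \<not> Q x \<Longrightarrow> \<exists>y. R\<^sup>+\<^sup>+ x y \<and> f y < f x"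
    and "P x"
  shows "\<exists>y. R\<^sup>*\<^sup>* x y \<and> P y \<and> Q y"
  using \<open>P x\<close>
proof (induction x rule: measure_induct_rule[of f])
  case (less x)
  show ?case
  proof (cases "Q x")
    case False
    then obtain y where xy: "R\<^sup>+\<^sup>+ x y" and "f y < f x"
      using decrease less.prems by blast
    from xy less.prems have "P y"
      by (induction rule: tranclp_induct) (auto intro: invariant)
    then obtain z where "R\<^sup>*\<^sup>* y z" "P z" "Q z"
      using less.IH \<open>f y < f x\<close> by blast
    with xy show ?thesis
      by (meson rtranclp_trans tranclp_into_rtranclp)
  qed (use less.prems in blast)
qed

theorem mainTheorem3:
  fixes V :: "'a set" and n :: nat and k :: "'a \<Rightarrow> nat" and G :: "'a uprod multiset"
  assumes "finite V" and "card V = n"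
    and "\<forall>u\<in>V. k u \<ge> 1"
    and "\<exists>u\<in>V. odd (k u)"
    and "\<exists>v\<in>V. int (k v) - (int n - 1) < 0 \<or> odd (int (k v) - (int n - 1))"
    and "multiloop_graph V G" and "\<forall>u\<in>V. deg G u = k u"
  shows "\<exists>H. (swap_step V k)\<^sup>*\<^sup>* G H \<and> multiloop_graph V H \<and> (\<forall>u\<in>V. deg H u = k u) \<and>
             (\<forall>u\<in>V. count H (Upair u u) = k u div 2)"
proof -
  let ?graph = "\<lambda>E. multiloop_graph V E \<and> (\<forall>u\<in>V. deg E u = k u)"
  let ?final = "\<lambda>E. \<forall>u\<in>V. count E (Upair u u) = k u div 2"
  have "\<exists>H. (swap_step V k)\<^sup>*\<^sup>* G H \<and> ?graph H \<and> ?final H"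
  proof (rule reach_by_decreasing_measure[where f = proper_edges])
    show "?graph E'" if "swap_step V k E E'" for E E'
      using swap_stepD[OF that] ..
    show "\<exists>E'. (swap_step V k)\<^sup>+\<^sup>+ E E' \<and> proper_edges E' < proper_edges E"
      if "?graph E" and "\<not> ?final E" for E
      using that reduce_proper_edges[OF assms(1-5)] by blast
    show "?graph G"
      using assms(6,7) ..
  qed
  then show ?thesis
    by blast
qed

end
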